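(* Let $p,q$ be odd primes, $m\in\mathbb{N}$ and $k\in\{0,1,\dots,m\}$. Suppose there exist $u,v\in\mathbb{Z}$ with $\gcd(u,v)=1$ such that either $$u+\delta_4 v=q^k \text{ and } H_p(u,v)=q^{m-k},$$ or $$u+\delta_4 v=-q^k \text{ and } H_p(u,v)=-q^{m-k}.$$ Then $k=0$, or ($k=m$ and $p\ne q$), or ($k=m-1$ and $p=q$).
   Context: For an odd prime $p$ put $\delta_4=1$ if $p\equiv 1\pmod 4$, $\delta_4=-1$ if $p\equiv 3\pmod 4$. Let $G_p(u,v)=\mathrm{Im}\big((1+i)(u+iv)^p\big)\in\mathbb{Z}[u,v]$ (for real $u,v$); $u+\delta_4 v$ divides $G_p$ in $\mathbb{Z}[u,v]$, and $H_p(u,v):=G_p(u,v)/(u+\delta_4 v)\in\mathbb{Z}[u,v]$. $\mathbb{N}$ denotes the positive integers. *)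

theory Defs
  imports Complex_Main "HOL-Computational_Algebra.Primes"
begin

definition delta4 :: "nat \<Rightarrow> int" where
  "delta4 p = (if p mod 4 = 1 then 1 else -1)"

definition Gp :: "nat \<Rightarrow> int \<Rightarrow> int \<Rightarrow> real" where
  "Gp p u v = Im ((1 + \<i>) * (of_int u + \<i> * of_int v) ^ p)"

text \<open>H_p(u,v) = G_p(u,v)/(u + delta4 v); this agrees with the value of the
  polynomial quotient whenever u + delta4 v is nonzero (the only case used).\<close>
definition Hp :: "nat \<Rightarrow> int \<Rightarrow> int \<Rightarrow> real" where
  "Hp p u v = Gp p u v / of_int (u + delta4 p * v)"

end

theory Submission
  imports Defs
begin

text \<open>
  Write s = u + \<delta> v and w = \<i> - \<delta>, so that u + \<i> v = s + v w. In the binomial expansion of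
  (1 + \<i>) (s + v w)^p the term free of s has imaginary part G_p(-\<delta>, 1) = 0, hence
  G_p = s H_p with H_p = p v^(p-1) a + r, where a = G_(p-1)(-\<delta>, 1) = \<plusminus>2^((p-1)/2), s divides r,
  and p^2 divides r as soon as p divides s. If k \<ge> 1 then q divides s but neither v (as
  gcd u v = 1) nor a, and comparing H_p = \<plusminus>q^(m-k) with p v^(p-1) a modulo q and q^2 leaves
  only m - k = 0 with p \<noteq> q, or m - k = 1 with p = q.\<close>

lemma Im_mult_binomial:
  "Im (z * (of_real s + of_real t * w) ^ n) =
     (\<Sum>j\<le>n. real (n choose j) * s ^ j * t ^ (n - j) * Im (z * w ^ (n - j)))"
proof -
  have "z * (of_real s + of_real t * w) ^ n =
     (\<Sum>j\<le>n. of_real (real (n choose j) * s ^ j * t ^ (n - j)) * (z * w ^ (n - j)))"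
    unfolding binomial_ring by (simp add: sum_distrib_left power_mult_distrib mult_ac)
  then show ?thesis by simp
qed

lemma Gp_binomial_expansion:
  "Gp p u v =
     (\<Sum>j\<le>p. real (p choose j) * of_int (u + d * v) ^ j * of_int v ^ (p - j) * Gp (p - j) (- d) 1)"
proof -
  have "complex_of_int u + \<i> * of_int v =
      of_real (of_int (u + d * v)) + of_real (of_int v) * (of_int (- d) + \<i> * of_int 1)"
    by (simp add: algebra_simps)
  then show ?thesis
    unfolding Gp_def by (simp only: Im_mult_binomial)
qed

lemma Gp_in_Ints: "Gp n a b \<in> \<int>"
proof -
  have "Re ((of_int a + \<i> * of_int b) ^ n) \<in> \<int> \<and> Im ((of_int a + \<i> * of_int b) ^ n) \<in> \<int>"
    by (induction n) auto
  then show ?thesis by (simp add: Gp_def)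
qed

lemma Im_one_plus_i_times_i_power: "Im ((1 + \<i>) * \<i> ^ r) = (-1) ^ (r div 2)"
proof (cases "even r")
  case True
  then show ?thesis by (simp only: i_even_power') simp
next
  case False
  then obtain k where r: "r = Suc (2 * k)" using oddE by fastforce
  then have "\<i> ^ r = \<i> * (-1) ^ k" by (simp add: power_mult)
  then show ?thesis using r by simp
qed

lemma unit_plus_i_even_power:
  assumes "\<bar>d\<bar> = 1"
  shows "(of_int d + \<i> * of_int 1) ^ (2 * r) = of_int ((2 * d) ^ r) * \<i> ^ r"
proof -
  have "(of_int d + \<i>) ^ 2 = of_int (2 * d) * \<i>"
    using assms by (auto simp: power2_eq_square algebra_simps abs_if complex_eq_iff split: if_splits)
  then show ?thesis
    by (simp add: power_mult power_mult_distrib)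
qed

lemma abs_Gp_even:
  assumes "\<bar>d\<bar> = 1"
  shows "\<bar>Gp (2 * r) d 1\<bar> = 2 ^ r"
proof -
  have "Gp (2 * r) d 1 = of_int ((2 * d) ^ r) * (-1) ^ (r div 2)"
    unfolding Gp_def unit_plus_i_even_power[OF assms]
    by (simp add: Im_one_plus_i_times_i_power[symmetric] algebra_simps)
  then show ?thesis
    using assms by (simp add: abs_mult power_abs flip: of_int_abs)
qed

lemma Gp_minus_delta4_eq_0:
  assumes "odd p"
  shows "Gp p (- delta4 p) 1 = 0"
proof -
  define e where "e = - delta4 p"
  obtain r where p: "p = 2 * r + 1" using assms oddE by blast
  have e: "\<bar>e\<bar> = 1" by (simp add: e_def delta4_def)
  have "(of_int e + \<i> * of_int 1) ^ p = of_int ((2 * e) ^ r) * ((of_int e + \<i>) * \<i> ^ r)"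
    unfolding p power_add unit_plus_i_even_power[OF e] by (simp add: mult_ac)
  then have "Gp p e 1 = of_int ((2 * e) ^ r) * Im ((1 + \<i>) * (of_int e + \<i>) * \<i> ^ r)"
    unfolding Gp_def by (simp add: algebra_simps)
  also have "Im ((1 + \<i>) * (of_int e + \<i>) * \<i> ^ r) = 0"
  proof (cases "p mod 4 = 1")
    case True
    then have "e = -1" by (simp add: e_def delta4_def)
    moreover have "even r" using True p by presburger
    ultimately show ?thesis by (simp add: algebra_simps)
  next
    case False
    then have "e = 1" by (simp add: e_def delta4_def)
    have "even (r + 1)" using False p by presburger
    have "(1 + \<i>) * (of_int e + \<i>) * \<i> ^ r = 2 * \<i> ^ (r + 1)"
      using \<open>e = 1\<close> by (simp add: algebra_simps)
    also have "\<dots> = 2 * (-1) ^ ((r + 1) div 2)"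
      using \<open>even (r + 1)\<close> by (simp only: i_even_power')
    finally show ?thesis by simp
  qed
  finally show ?thesis by (simp add: e_def)
qed

lemma prime_square_dvd_choose_mult_power:
  assumes "prime p" "int p dvd s" "2 \<le> j" "j \<le> p" "3 \<le> p"
  shows "int p ^ 2 dvd int (p choose j) * s ^ (j - 1)"
proof (cases "j = p")
  case True
  have "int p ^ 2 dvd s ^ 2" using assms(2) by simp
  also have "s ^ 2 dvd s ^ (j - 1)" using True assms(5) by (simp add: le_imp_power_dvd)
  finally show ?thesis by simp
next
  case False
  then have "int p dvd int (p choose j)"
    using dvd_choose_prime[of j p] assms by simp
  moreover have "s dvd s ^ (j - 1)" using assms(3) by simp
  then have "int p dvd s ^ (j - 1)" using assms(2) by (rule dvd_trans[rotated])
  ultimately show ?thesis by (simp add: power2_eq_square mult_dvd_mono)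
qed

lemma Gp_factorization:
  assumes "prime p" "odd p"
  obtains a r :: int where
    "Gp p u v = of_int ((u + delta4 p * v) * (int p * v ^ (p - 1) * a + r))"
    "\<bar>a\<bar> = 2 ^ (p div 2)"
    "(u + delta4 p * v) dvd r"
    "int p dvd (u + delta4 p * v) \<longrightarrow> int p ^ 2 dvd r"
proof -
  define d where "d = delta4 p"
  define s where "s = u + d * v"
  have "\<forall>n. \<exists>k. Gp n (- d) 1 = of_int k" using Gp_in_Ints Ints_cases by metis
  then obtain A where A: "\<And>n. Gp n (- d) 1 = of_int (A n)" by metis
  have p3: "3 \<le> p" using assms prime_ge_2_nat[of p] by presburger
  define f where "f j = int (p choose j) * s ^ j * v ^ (p - j) * A (p - j)" for j
  define r where "r = (\<Sum>j=2..p. int (p choose j) * s ^ (j - 1) * v ^ (p - j) * A (p - j))"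
  have "Gp p u v = of_int (\<Sum>j\<le>p. f j)"
    by (simp add: Gp_binomial_expansion[of p u v d] f_def A s_def)
  also have "(\<Sum>j\<le>p. f j) = f 0 + f 1 + (\<Sum>j=2..p. f j)"
    using p3 by (simp add: atMost_atLeast0 sum.atLeast_Suc_atMost numeral_2_eq_2)
  also have "f 0 = 0"
    using Gp_minus_delta4_eq_0[OF assms(2)] A[of p] by (simp add: f_def d_def)
  also have "f 1 = s * (int p * v ^ (p - 1) * A (p - 1))"
    by (simp add: f_def)
  also have "(\<Sum>j=2..p. f j) = s * r"
    unfolding r_def sum_distrib_left
  proof (rule sum.cong)
    fix j assume "j \<in> {2..p}"
    then have "s ^ j = s * s ^ (j - 1)" by (simp flip: power_Suc)
    then show "f j = s * (int (p choose j) * s ^ (j - 1) * v ^ (p - j) * A (p - j))"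
      by (simp add: f_def)
  qed simp
  finally have "Gp p u v = of_int (s * (int p * v ^ (p - 1) * A (p - 1) + r))"
    by (simp add: algebra_simps)
  moreover have "\<bar>A (p - 1)\<bar> = 2 ^ (p div 2)"
  proof -
    have "p - 1 = 2 * (p div 2)" using assms(2) by presburger
    moreover have "\<bar>- d\<bar> = 1" by (simp add: d_def delta4_def)
    ultimately have "\<bar>Gp (p - 1) (- d) 1\<bar> = 2 ^ (p div 2)" using abs_Gp_even by metis
    then show ?thesis by (simp add: A flip: of_int_abs)
  qed
  moreover have "s dvd r"
    unfolding r_def by (intro dvd_sum) simp
  moreover have "int p dvd s \<longrightarrow> int p ^ 2 dvd r"
    unfolding r_def using prime_square_dvd_choose_mult_power[OF assms(1) _ _ _ p3]
    by (auto intro: dvd_sum)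
  ultimately show thesis using that[of "A (p - 1)" r] unfolding s_def d_def by blast
qed

lemma Hp_eq_linear_form:
  assumes "prime p" "odd p" "u + delta4 p * v \<noteq> 0"
  obtains a r :: int where
    "Hp p u v = of_int (int p * v ^ (p - 1) * a + r)"
    "\<bar>a\<bar> = 2 ^ (p div 2)"
    "(u + delta4 p * v) dvd r"
    "int p dvd (u + delta4 p * v) \<longrightarrow> int p ^ 2 dvd r"
proof -
  obtain a r where G: "Gp p u v = of_int ((u + delta4 p * v) * (int p * v ^ (p - 1) * a + r))"
    and "\<bar>a\<bar> = 2 ^ (p div 2)" "(u + delta4 p * v) dvd r"
      "int p dvd (u + delta4 p * v) \<longrightarrow> int p ^ 2 dvd r"
    using Gp_factorization[OF assms(1,2)] .
  moreover have "Hp p u v = of_int (int p * v ^ (p - 1) * a + r)"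
    using assms(3) unfolding Hp_def G of_int_mult[of "u + delta4 p * v"]
    by (simp del: of_int_add of_int_mult)
  ultimately show thesis using that by blast
qed

lemma prime_dvd_add_mult_coprime_imp_not_dvd:
  fixes u v c :: int
  assumes "prime q" "gcd u v = 1" "q dvd u + c * v"
  shows "\<not> q dvd v"
proof
  assume "q dvd v"
  with assms(3) have "q dvd u" by (simp add: dvd_add_left_iff)
  with \<open>q dvd v\<close> have "q dvd gcd u v" by simp
  with assms(1,2) show False by (simp add: prime_int_iff)
qed

lemma odd_prime_not_dvd_power_of_two:
  fixes a :: int
  assumes "prime q" "odd q" "\<bar>a\<bar> = 2 ^ e"
  shows "\<not> int q dvd a"
proof
  assume "int q dvd a"
  then have "int q dvd 2 ^ e" using assms(3) by (metis dvd_abs_iff)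
  then have "int q dvd 2" using assms(1) prime_dvd_power by (metis prime_nat_int_transfer)
  then have "q dvd 2" by presburger
  then show False using assms(1,2) primes_dvd_imp_eq two_is_prime_nat by blast
qed

lemma linear_form_eq_unit_times_prime_power:
  fixes p q j :: nat and x r \<sigma> :: int
  assumes "prime p" "prime q" "\<bar>\<sigma>\<bar> = 1"
    and "\<not> int q dvd x" "int q dvd r" "p = q \<Longrightarrow> int p ^ 2 dvd r"
    and "int p * x + r = \<sigma> * int q ^ j"
  shows "(j = 0 \<and> p \<noteq> q) \<or> (j = 1 \<and> p = q)"
proof (cases "j = 0")
  case True
  have "p \<noteq> q"
  proof
    assume "p = q"
    then have "int p dvd int p * x + r" using assms(5) by simp
    then have "int p dvd \<sigma>" using assms(7) True by simp
    then show False using assms(1,3) by (auto simp: abs_if split: if_splits)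
  qed
  with True show ?thesis by simp
next
  case False
  then have "int q dvd int p * x + r" unfolding assms(7) by simp
  then have "int q dvd int p * x" using assms(5) by (simp add: dvd_add_left_iff)
  then have "q dvd p" using assms(2,4) by (simp add: prime_dvd_mult_iff)
  then have "p = q" using assms(1,2) primes_dvd_imp_eq by blast
  have "j = 1"
  proof (rule ccontr)
    assume "j \<noteq> 1"
    with False have "int p ^ 2 dvd \<sigma> * int q ^ j" using \<open>p = q\<close> by (simp add: le_imp_power_dvd)
    then have "int p ^ 2 dvd int p * x" using assms(6,7) \<open>p = q\<close> by (metis dvd_add_left_iff)
    then have "int p dvd x" using assms(1) by (simp add: power2_eq_square)
    then show False using assms(4) \<open>p = q\<close> by simp
  qed
  with \<open>p = q\<close> show ?thesis by simp
qed

theorem lemma6: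
  fixes p q m k :: nat
  assumes "prime p" "odd p" "prime q" "odd q" "m \<ge> 1" "k \<le> m"
    and "\<exists>u v :: int. gcd u v = 1 \<and>
          ((u + delta4 p * v = int q ^ k \<and> Hp p u v = real q ^ (m - k)) \<or>
           (u + delta4 p * v = - (int q ^ k) \<and> Hp p u v = - (real q ^ (m - k))))"
  shows "k = 0 \<or> (k = m \<and> p \<noteq> q) \<or> (k = m - 1 \<and> p = q)"
proof -
  obtain u v \<sigma> :: int where coprime: "gcd u v = 1" and \<sigma>: "\<bar>\<sigma>\<bar> = 1"
    and s: "u + delta4 p * v = \<sigma> * int q ^ k" and H: "Hp p u v = of_int (\<sigma> * int q ^ (m - k))"
  proof -
    from assms(7) obtain u v :: int where "gcd u v = 1"
      and "(u + delta4 p * v = int q ^ k \<and> Hp p u v = real q ^ (m - k)) \<or>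
           (u + delta4 p * v = - (int q ^ k) \<and> Hp p u v = - (real q ^ (m - k)))"
      by metis
    then show thesis using that[of u v 1] that[of u v "-1"] by auto
  qed
  have "u + delta4 p * v \<noteq> 0" using s \<sigma> assms(3) by auto
  then obtain a r where "Hp p u v = of_int (int p * v ^ (p - 1) * a + r)"
    and a: "\<bar>a\<bar> = 2 ^ (p div 2)" and r: "(u + delta4 p * v) dvd r"
    and r_p: "int p dvd (u + delta4 p * v) \<longrightarrow> int p ^ 2 dvd r"
    using Hp_eq_linear_form[OF assms(1,2)] by blast
  with H have eq: "int p * (v ^ (p - 1) * a) + r = \<sigma> * int q ^ (m - k)"
    by (simp only: of_int_eq_iff mult.assoc)
  show ?thesis
  proof (cases "k = 0")
    case False
    then have q_s: "int q dvd u + delta4 p * v" using s by simp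
    have q_prime: "prime (int q)" using assms(3) by simp
    have "\<not> int q dvd v ^ (p - 1) * a"
      using prime_dvd_add_mult_coprime_imp_not_dvd[OF q_prime coprime q_s]
        odd_prime_not_dvd_power_of_two[OF assms(3,4) a] prime_dvd_power[OF q_prime]
      by (auto simp: prime_dvd_mult_iff[OF q_prime])
    moreover have "int q dvd r" using q_s r by (rule dvd_trans)
    moreover have "p = q \<Longrightarrow> int p ^ 2 dvd r" using q_s r_p by simp
    ultimately have "(m - k = 0 \<and> p \<noteq> q) \<or> (m - k = 1 \<and> p = q)"
      using linear_form_eq_unit_times_prime_power[OF assms(1,3) \<sigma> _ _ _ eq] by blast
    then show ?thesis using assms(6) by auto
  qed simp
qed

end
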